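(* For every $n\ge1$ and masses $m_i>0$, the $n$-body problem in ${\bf H}^2$ has no parabolic relative equilibria: there is no solution defined for all $t\in\mathbb R$ of the form $x_i=a_i-b_it+c_it$, $y_i=a_it+b_i(1-t^2/2)+c_it^2/2$, $z_i=a_it-b_it^2/2+c_i(1+t^2/2)$, $i=1,\dots,n$, with real constants $a_i,b_i,c_i$ satisfying $a_i^2+b_i^2-c_i^2=-1$.
   Context: The $n$-body problem in ${\bf H}^2$ (Weierstrass model): with the Lorentz inner product ${\bf a}\boxdot{\bf b}=a_xb_x+a_yb_y-a_zb_z$ on $\mathbb R^3$, ${\bf H}^2=\{(x,y,z): x^2+y^2-z^2=-1,\ z>0\}$. Bodies of masses $m_1,\dots,m_n>0$ have positions ${\bf q}_i=(x_i,y_i,z_i)\in{\bf H}^2$ and satisfy $$\ddot{\bf q}_i=\sum_{j\ne i}\frac{m_j[{\bf q}_j+({\bf q}_i\boxdot{\bf q}_j){\bf q}_i]}{[({\bf q}_i\boxdot{\bf q}_j)^2-1]^{3/2}}+(\dot{\bf q}_i\boxdot\dot{\bf q}_i){\bf q}_i,\qquad {\bf q}_i\boxdot{\bf q}_i=-1,\ \ {\bf q}_i\boxdot\dot{\bf q}_i=0,$$ $i=1,\dots,n$, defined only for collisionless configurations. The angular momentum $\sum_i m_i{\bf q}_i\boxtimes\dot{\bf q}_i$, where ${\bf a}\boxtimes{\bf b}=(a_yb_z-a_zb_y,\ a_zb_x-a_xb_z,\ a_yb_x-a_xb_y)$, is a first integral. *)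

theory Defs
  imports "HOL-Analysis.Analysis"
begin

type_synonym vec3 = "real \<times> real \<times> real"

definition xc :: "vec3 \<Rightarrow> real" where "xc v = fst v"
definition yc :: "vec3 \<Rightarrow> real" where "yc v = fst (snd v)"
definition zc :: "vec3 \<Rightarrow> real" where "zc v = snd (snd v)"

definition lorentz :: "vec3 \<Rightarrow> vec3 \<Rightarrow> real" where
  "lorentz a b = xc a * xc b + yc a * yc b - zc a * zc b"

definition inH2 :: "vec3 \<Rightarrow> bool" where
  "inH2 p \<longleftrightarrow> lorentz p p = -1 \<and> zc p > 0"

definition nbody_solution ::
  "nat \<Rightarrow> (nat \<Rightarrow> real) \<Rightarrow> (nat \<Rightarrow> real \<Rightarrow> vec3) \<Rightarrow> bool" where
  "nbody_solution n m q \<longleftrightarrow>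
    (\<exists>v acc :: nat \<Rightarrow> real \<Rightarrow> vec3. \<forall>t::real.
       (\<forall>i<n. (q i has_vector_derivative v i t) (at t)
            \<and> (v i has_vector_derivative acc i t) (at t)
            \<and> inH2 (q i t)
            \<and> lorentz (q i t) (v i t) = 0)
     \<and> (\<forall>i<n. \<forall>j<n. i \<noteq> j \<longrightarrow> q i t \<noteq> q j t)
     \<and> (\<forall>i<n. acc i t =
           (\<Sum>j\<in>{..<n} - {i}.
              (m j / ((lorentz (q i t) (q j t))\<^sup>2 - 1) powr (3/2))
                *\<^sub>R (q j t + lorentz (q i t) (q j t) *\<^sub>R q i t))
           + lorentz (v i t) (v i t) *\<^sub>R q i t))"

end

theory Submission
  imports Defs
begin

(* Write L for the first component of the Lorentz cross product,
   L p r = p_y r_z - p_z r_y.  Along any solution of the n-body problem the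
   "torque" sum  \<Sum>_i m_i L(q_i, q_i'')  vanishes: L(q_i, q_i) = 0 kills the
   velocity term, L is linear in its second argument, and the mutual force terms
   cancel in pairs because the coefficients are symmetric while L is
   antisymmetric (conservation of angular momentum).
   For a parabolic orbit with constants a, b, c the point at t = 0 is (a, b, c)
   and the acceleration is (0, w, w) with w = c - b, so L(q(0), q''(0)) = -w^2.
   Hence \<Sum>_i m_i w_i^2 = 0, every w_i vanishes, and the constraint
   a^2 + b^2 - c^2 = -1 becomes a^2 = -1 for body 0: a contradiction. *)

text \<open>ang_x p r is the x-component of p \<boxtimes> r; summed with masses over
  positions and velocities it is the x-component of the angular momentum.\<close>
definition ang_x :: "vec3 \<Rightarrow> vec3 \<Rightarrow> real" where
  "ang_x p r = yc p * zc r - zc p * yc r"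

lemma ang_x_sum: "ang_x p (\<Sum>j\<in>S. f j) = (\<Sum>j\<in>S. ang_x p (f j))"
  by (simp add: ang_x_def yc_def zc_def fst_sum snd_sum sum_distrib_left sum_subtractf)

lemma ang_x_add: "ang_x p (r + s) = ang_x p r + ang_x p s"
  by (simp add: ang_x_def yc_def zc_def algebra_simps)

lemma ang_x_scaleR: "ang_x p (k *\<^sub>R r) = k * ang_x p r"
  by (simp add: ang_x_def yc_def zc_def algebra_simps)

lemma ang_x_self: "ang_x p p = 0"
  by (simp add: ang_x_def)

lemma ang_x_antisym: "ang_x p r = - ang_x r p"
  by (simp add: ang_x_def)

lemma lorentz_sym: "lorentz p r = lorentz r p"
  by (simp add: lorentz_def)

text \<open>A double sum over ordered pairs of distinct indices of an antisymmetric
  quantity vanishes; this is the cancellation of action and reaction.\<close>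
lemma sum_pairs_antisym:
  fixes f :: "nat \<Rightarrow> nat \<Rightarrow> real"
  assumes anti: "\<And>i j. f i j = - f j i"
  shows "(\<Sum>i<n. \<Sum>j\<in>{..<n} - {i}. f i j) = 0"
proof -
  have diag: "f i i = 0" for i using anti[of i i] by simp
  have drop_diag: "(\<Sum>j\<in>{..<n} - {i}. f i j) = (\<Sum>j<n. f i j)" if "i < n" for i
    using that diag by (simp add: sum.remove[of "{..<n}" i "f i"])
  have full: "(\<Sum>i<n. \<Sum>j\<in>{..<n} - {i}. f i j) = (\<Sum>i<n. \<Sum>j<n. f i j)"
    by (rule sum.cong) (simp_all add: drop_diag)
  have "(\<Sum>i<n. \<Sum>j<n. f i j) = (\<Sum>j<n. \<Sum>i<n. f i j)"
    by (rule sum.swap)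
  also have "\<dots> = (\<Sum>j<n. \<Sum>i<n. - f j i)"
    by (intro sum.cong refl anti)
  also have "\<dots> = - (\<Sum>i<n. \<Sum>j<n. f i j)"
    by (simp add: sum_negf)
  finally show ?thesis
    using full by linarith
qed

lemma torque_balance:
  fixes q :: "nat \<Rightarrow> vec3" and m s :: "nat \<Rightarrow> real"
  shows "(\<Sum>i<n. m i * ang_x (q i)
            ((\<Sum>j\<in>{..<n} - {i}.
                (m j / ((lorentz (q i) (q j))\<^sup>2 - 1) powr (3/2))
                  *\<^sub>R (q j + lorentz (q i) (q j) *\<^sub>R q i))
             + s i *\<^sub>R q i)) = 0"
proof -
  define K where "K i j = m i * m j / ((lorentz (q i) (q j))\<^sup>2 - 1) powr (3/2)" for i j
  have "m i * ang_x (q i)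
            ((\<Sum>j\<in>{..<n} - {i}.
                (m j / ((lorentz (q i) (q j))\<^sup>2 - 1) powr (3/2))
                  *\<^sub>R (q j + lorentz (q i) (q j) *\<^sub>R q i))
             + s i *\<^sub>R q i)
        = (\<Sum>j\<in>{..<n} - {i}. K i j * ang_x (q i) (q j))" for i
    by (simp add: ang_x_sum ang_x_add ang_x_scaleR ang_x_self K_def sum_distrib_left mult.assoc)
  then have "?thesis \<longleftrightarrow> (\<Sum>i<n. \<Sum>j\<in>{..<n} - {i}. K i j * ang_x (q i) (q j)) = 0"
    by simp
  moreover have "(\<Sum>i<n. \<Sum>j\<in>{..<n} - {i}. K i j * ang_x (q i) (q j)) = 0"
  proof (rule sum_pairs_antisym)
    show "K i j * ang_x (q i) (q j) = - (K j i * ang_x (q j) (q i))" for i j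
      by (simp add: K_def lorentz_sym[of "q i"] ang_x_antisym[of "q i"])
  qed
  ultimately show ?thesis
    by blast
qed

lemma solution_torque_balance:
  assumes sol: "nbody_solution n m q"
    and vel: "\<And>i t. i < n \<Longrightarrow> (q i has_vector_derivative v i t) (at t)"
    and accel: "\<And>i. i < n \<Longrightarrow> (v i has_vector_derivative A i t) (at t)"
  shows "(\<Sum>i<n. m i * ang_x (q i t) (A i t)) = 0"
proof -
  obtain v' acc :: "nat \<Rightarrow> real \<Rightarrow> vec3" where
    vel': "\<And>i t. i < n \<Longrightarrow> (q i has_vector_derivative v' i t) (at t)"
    and accel': "\<And>i. i < n \<Longrightarrow> (v' i has_vector_derivative acc i t) (at t)"
    and motion: "\<And>i. i < n \<Longrightarrow> acc i t =
           (\<Sum>j\<in>{..<n} - {i}.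
              (m j / ((lorentz (q i t) (q j t))\<^sup>2 - 1) powr (3/2))
                *\<^sub>R (q j t + lorentz (q i t) (q j t) *\<^sub>R q i t))
           + lorentz (v' i t) (v' i t) *\<^sub>R q i t"
    using sol unfolding nbody_solution_def by blast
  have same_vel: "v' i = v i" if "i < n" for i
    using vector_derivative_unique_at[OF vel'[OF that] vel[OF that]] by blast
  have "A i t = acc i t" if "i < n" for i
    using vector_derivative_unique_at[OF accel[OF that]] accel'[OF that] same_vel[OF that]
    by simp
  then show ?thesis
    using torque_balance[where q = "\<lambda>i. q i t" and s = "\<lambda>i. lorentz (v' i t) (v' i t)"] motion
    by simp
qed

definition parabolic_orbit :: "real \<Rightarrow> real \<Rightarrow> real \<Rightarrow> real \<Rightarrow> vec3" where
  "parabolic_orbit a b c t =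
     (a - b * t + c * t,
      a * t + b * (1 - t\<^sup>2 / 2) + c * t\<^sup>2 / 2,
      a * t - b * t\<^sup>2 / 2 + c * (1 + t\<^sup>2 / 2))"

definition parabolic_velocity :: "real \<Rightarrow> real \<Rightarrow> real \<Rightarrow> real \<Rightarrow> vec3" where
  "parabolic_velocity a b c t = (c - b, a + (c - b) * t, a + (c - b) * t)"

lemma parabolic_orbit_deriv:
  "(parabolic_orbit a b c has_vector_derivative parabolic_velocity a b c t) (at t)"
proof -
  have "((\<lambda>t. a - b * t + c * t) has_real_derivative (c - b)) (at t)"
    and "((\<lambda>t. a * t + b * (1 - t\<^sup>2 / 2) + c * t\<^sup>2 / 2) has_real_derivative (a + (c - b) * t)) (at t)"
    and "((\<lambda>t. a * t - b * t\<^sup>2 / 2 + c * (1 + t\<^sup>2 / 2)) has_real_derivative (a + (c - b) * t)) (at t)"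
    by (auto intro!: derivative_eq_intros simp: algebra_simps)
  then show ?thesis
    unfolding parabolic_orbit_def parabolic_velocity_def
    by (auto intro!: has_vector_derivative_Pair simp: has_real_derivative_iff_has_vector_derivative)
qed

lemma parabolic_velocity_deriv:
  "(parabolic_velocity a b c has_vector_derivative (0, c - b, c - b)) (at t)"
proof -
  have "((\<lambda>t. a + (c - b) * t) has_real_derivative (c - b)) (at t)"
    by (auto intro!: derivative_eq_intros)
  then show ?thesis
    unfolding parabolic_velocity_def
    by (auto intro!: has_vector_derivative_Pair simp: has_real_derivative_iff_has_vector_derivative)
qed

lemma parabolic_torque:
  "ang_x (parabolic_orbit a b c 0) (0, c - b, c - b) = - (c - b)\<^sup>2"
  by (simp add: ang_x_def parabolic_orbit_def yc_def zc_def power2_eq_square algebra_simps)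

theorem mainTheorem19:
  fixes n :: nat and m :: "nat \<Rightarrow> real"
  assumes "n \<ge> 1" and "\<forall>i<n. m i > 0"
  shows "\<not> (\<exists>a b c :: nat \<Rightarrow> real.
            (\<forall>i<n. (a i)\<^sup>2 + (b i)\<^sup>2 - (c i)\<^sup>2 = -1)
          \<and> nbody_solution n m
              (\<lambda>i t. (a i - b i * t + c i * t,
                      a i * t + b i * (1 - t\<^sup>2 / 2) + c i * t\<^sup>2 / 2,
                      a i * t - b i * t\<^sup>2 / 2 + c i * (1 + t\<^sup>2 / 2))))"
proof
  assume "\<exists>a b c :: nat \<Rightarrow> real. (\<forall>i<n. (a i)\<^sup>2 + (b i)\<^sup>2 - (c i)\<^sup>2 = -1)
          \<and> nbody_solution n m
              (\<lambda>i t. (a i - b i * t + c i * t,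
                      a i * t + b i * (1 - t\<^sup>2 / 2) + c i * t\<^sup>2 / 2,
                      a i * t - b i * t\<^sup>2 / 2 + c i * (1 + t\<^sup>2 / 2)))"
  then obtain a b c :: "nat \<Rightarrow> real" where hyp: "\<forall>i<n. (a i)\<^sup>2 + (b i)\<^sup>2 - (c i)\<^sup>2 = -1"
    and sol: "nbody_solution n m (\<lambda>i. parabolic_orbit (a i) (b i) (c i))"
    unfolding parabolic_orbit_def by blast
  have "(\<Sum>i<n. m i * ang_x (parabolic_orbit (a i) (b i) (c i) 0) (0, c i - b i, c i - b i)) = 0"
    using solution_torque_balance[OF sol, of "\<lambda>i. parabolic_velocity (a i) (b i) (c i)"
            "\<lambda>i t. (0, c i - b i, c i - b i)" 0]
    by (simp add: parabolic_orbit_deriv parabolic_velocity_deriv)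
  then have "(\<Sum>i<n. m i * (c i - b i)\<^sup>2) = 0"
    by (simp add: parabolic_torque sum_negf)
  moreover have "\<forall>i\<in>{..<n}. 0 \<le> m i * (c i - b i)\<^sup>2"
    using assms(2) by auto
  ultimately have "\<forall>i\<in>{..<n}. m i * (c i - b i)\<^sup>2 = 0"
    using sum_nonneg_eq_0_iff[of "{..<n}" "\<lambda>i. m i * (c i - b i)\<^sup>2"] by auto
  then have "m 0 * (c 0 - b 0)\<^sup>2 = 0"
    using assms(1) by auto
  moreover have "m 0 > 0"
    using assms by simp
  ultimately have "c 0 = b 0"
    by simp
  then have "(a 0)\<^sup>2 = -1"
    using hyp assms(1) by force
  then show False
    using zero_le_power2[of "a 0"] by linarith
qed

end
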